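(* Let $(V,\omega)$ be a vertex operator algebra. Then the set $\operatorname{Sc}(V,\omega)$ of semi-conformal vectors of $(V,\omega)$ is a Zariski closed subset of the finite-dimensional complex vector space $V_2$; in particular it is an affine algebraic variety over $\mathbb{C}$.
   Context: A vertex operator algebra $(V,Y,\mathbf 1,\omega)$ is $\mathbb Z$-graded, $V=\bigoplus_n V_n$, by the eigenvalues of $L(0)$, where $Y(\omega,z)=\sum_n L(n)z^{-n-2}$; each $V_n$ is finite dimensional and $V_n=0$ for $n\ll 0$. Write $Y(v,z)=\sum_n v_nz^{-n-1}$. A vertex operator subalgebra $(U,\omega')$ of $(V,\omega)$ is a vertex subalgebra $U\ni\mathbf 1$ together with a vector $\omega'\in U$ making $(U,Y|_U,\mathbf 1,\omega')$ a vertex operator algebra (the conformal vector $\omega'$ may differ from $\omega$). It is called semi-conformal if $L(n)|_U=L'(n)|_U$ for all $n\ge 0$, where $Y(\omega',z)=\sum_n L'(n)z^{-n-2}$ (equivalently $\omega_n|_U=\omega'_n|_U$ for all $n\ge 0$). A semi-conformal vector of $(V,\omega)$ is a vector $\omega'\in V_2$ which is the conformal vector of some semi-conformal vertex operator subalgebra. $\operatorname{Sc}(V,\omega)$ denotes the set of all semi-conformal vectors. *)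

theory Defs
  imports Complex_Main "HOL-Library.Groups_Big_Fun"
begin

text \<open>A vertex operator algebra is encoded by: a complex scalar multiplication
  sc on a type 'v (the ambient vector space), a carrier subspace V, the modes
  Y u n w = u_n w (so Y(u,z) = sum_n u_n z^(-n-1)), the vacuum vac and the
  conformal vector om.  L(n) = om_(n+1).\<close>

definition wt_space ::
  "(complex \<Rightarrow> 'v::ab_group_add \<Rightarrow> 'v) \<Rightarrow> 'v set \<Rightarrow> ('v \<Rightarrow> int \<Rightarrow> 'v \<Rightarrow> 'v) \<Rightarrow> 'v \<Rightarrow> int \<Rightarrow> 'v set"
  where "wt_space sc V Y om n = {v \<in> V. Y om 1 v = sc (of_int n) v}"

definition is_voa ::
  "(complex \<Rightarrow> 'v::ab_group_add \<Rightarrow> 'v) \<Rightarrow> 'v set \<Rightarrow> ('v \<Rightarrow> int \<Rightarrow> 'v \<Rightarrow> 'v) \<Rightarrow> 'v \<Rightarrow> 'v \<Rightarrow> bool"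
  where "is_voa sc V Y vac om \<longleftrightarrow>
    module.subspace sc V \<and> vac \<in> V \<and> om \<in> V \<and>
    \<comment> \<open>closure of V under all products\<close>
    (\<forall>u\<in>V. \<forall>w\<in>V. \<forall>n. Y u n w \<in> V) \<and>
    \<comment> \<open>bilinearity\<close>
    (\<forall>a u u' w n. u \<in> V \<longrightarrow> u' \<in> V \<longrightarrow> w \<in> V \<longrightarrow>
        Y (sc a u + u') n w = sc a (Y u n w) + Y u' n w \<and>
        Y w n (sc a u + u') = sc a (Y w n u) + Y w n u') \<and>
    \<comment> \<open>truncation\<close>
    (\<forall>u\<in>V. \<forall>w\<in>V. \<exists>N. \<forall>n\<ge>N. Y u n w = 0) \<and>
    \<comment> \<open>vacuum property Y(1,z) = id\<close>
    (\<forall>w\<in>V. \<forall>n. Y vac n w = (if n = -1 then w else 0)) \<and>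
    \<comment> \<open>creation property\<close>
    (\<forall>u\<in>V. (\<forall>n\<ge>0. Y u n vac = 0) \<and> Y u (-1) vac = u) \<and>
    \<comment> \<open>Jacobi identity, in the equivalent Borcherds (component) form\<close>
    (\<forall>u\<in>V. \<forall>v\<in>V. \<forall>w\<in>V. \<forall>m n r :: int.
        (\<Sum>i::nat. sc ((of_int m :: complex) gchoose i) (Y (Y u (r + int i) v) (m + n - int i) w))
      = (\<Sum>i::nat. sc ((-1) ^ i * ((of_int r :: complex) gchoose i))
            (Y u (m + r - int i) (Y v (n + int i) w)
             - sc ((-1) powi r) (Y v (n + r - int i) (Y u (m + int i) w))))) \<and>
    \<comment> \<open>Virasoro relations with some central charge c\<close>
    (\<exists>c::complex. \<forall>m n :: int. \<forall>w\<in>V.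
        Y om (m + 1) (Y om (n + 1) w) - Y om (n + 1) (Y om (m + 1) w)
      = sc (of_int (m - n)) (Y om (m + n + 1) w)
        + sc ((of_int m ^ 3 - of_int m) / 12 * (if m + n = 0 then c else 0)) w) \<and>
    \<comment> \<open>L(-1)-derivative property: Y(L(-1)u,z) = d/dz Y(u,z)\<close>
    (\<forall>u\<in>V. \<forall>w\<in>V. \<forall>n. Y (Y om 0 u) n w = sc (- of_int n) (Y u (n - 1) w)) \<and>
    \<comment> \<open>grading by L(0)-eigenvalues\<close>
    om \<in> wt_space sc V Y om 2 \<and>
    V \<subseteq> module.span sc (\<Union>n. wt_space sc V Y om n) \<and>
    (\<forall>n. \<exists>B. finite B \<and> B \<subseteq> wt_space sc V Y om n \<and>
           wt_space sc V Y om n \<subseteq> module.span sc B) \<and>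
    (\<exists>N. \<forall>n<N. wt_space sc V Y om n = {0})"

definition semi_conformal_subVOA ::
  "(complex \<Rightarrow> 'v::ab_group_add \<Rightarrow> 'v) \<Rightarrow> 'v set \<Rightarrow> ('v \<Rightarrow> int \<Rightarrow> 'v \<Rightarrow> 'v) \<Rightarrow> 'v \<Rightarrow> 'v
     \<Rightarrow> 'v set \<Rightarrow> 'v \<Rightarrow> bool"
  where "semi_conformal_subVOA sc V Y vac om U om' \<longleftrightarrow>
    U \<subseteq> V \<and> is_voa sc U Y vac om' \<and>
    (\<forall>n\<ge>0. \<forall>u\<in>U. Y om n u = Y om' n u)"

definition semi_conformal_vectors ::
  "(complex \<Rightarrow> 'v::ab_group_add \<Rightarrow> 'v) \<Rightarrow> 'v set \<Rightarrow> ('v \<Rightarrow> int \<Rightarrow> 'v \<Rightarrow> 'v) \<Rightarrow> 'v \<Rightarrow> 'v \<Rightarrow> 'v set"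
  where "semi_conformal_vectors sc V Y vac om =
    {om' \<in> wt_space sc V Y om 2. \<exists>U. semi_conformal_subVOA sc V Y vac om U om'}"

text \<open>Polynomial functions on a subspace W: the algebra generated by the constants
  and the (complex-)linear functionals on W. Only values on W matter.\<close>
inductive_set polyfun_on ::
  "(complex \<Rightarrow> 'v::ab_group_add \<Rightarrow> 'v) \<Rightarrow> 'v set \<Rightarrow> ('v \<Rightarrow> complex) set"
  for sc W where
  const: "(\<lambda>_. c) \<in> polyfun_on sc W"
| linear: "(\<forall>x\<in>W. \<forall>y\<in>W. \<forall>a. f (sc a x + y) = a * f x + f y) \<Longrightarrow> f \<in> polyfun_on sc W"
| add: "f \<in> polyfun_on sc W \<Longrightarrow> g \<in> polyfun_on sc W \<Longrightarrow> (\<lambda>x. f x + g x) \<in> polyfun_on sc W"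
| mult: "f \<in> polyfun_on sc W \<Longrightarrow> g \<in> polyfun_on sc W \<Longrightarrow> (\<lambda>x. f x * g x) \<in> polyfun_on sc W"

definition zariski_closed_in ::
  "(complex \<Rightarrow> 'v::ab_group_add \<Rightarrow> 'v) \<Rightarrow> 'v set \<Rightarrow> 'v set \<Rightarrow> bool"
  where "zariski_closed_in sc W S \<longleftrightarrow>
    (\<exists>P \<subseteq> polyfun_on sc W. S = {x \<in> W. \<forall>p\<in>P. p x = 0})"

end

theory Submission
  imports Defs
begin

text \<open>A vector x \<in> V_2 is semi-conformal exactly when x_k x = \<omega>_k x for all k \<ge> 0 and
  L(1) x = 0, L(2) x \<in> \<complex>\<one>, L(k) x = 0 for k \<ge> 3.  Necessity comes from the Virasoro relations
  of the subalgebra applied to the vacuum.  Conversely, the span of the homogeneous vectors on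
  which the non-negative modes of \<omega> and x agree is closed under all products by the commutator
  formula, and these equations make x a conformal vector of it.  Tested against linear
  functionals, the equations are linear or quadratic in x, hence polynomial on the
  finite-dimensional space V_2.\<close>

lemma polyfun_on_diff:
  assumes "f \<in> polyfun_on sc W" "g \<in> polyfun_on sc W"
  shows "(\<lambda>x. f x - g x) \<in> polyfun_on sc W"
proof -
  have "(\<lambda>x. f x + (- 1) * g x) \<in> polyfun_on sc W"
    by (intro polyfun_on.add polyfun_on.mult polyfun_on.const assms)
  then show ?thesis by simp
qed

lemma polyfun_on_sum:
  "finite A \<Longrightarrow> (\<And>i. i \<in> A \<Longrightarrow> g i \<in> polyfun_on sc W) \<Longrightarrow> (\<lambda>x. \<Sum>i\<in>A. g i x) \<in> polyfun_on sc W"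
proof (induction A rule: finite_induct)
  case empty
  show ?case using polyfun_on.const[of 0 sc W] by simp
next
  case (insert a A)
  then show ?case using polyfun_on.add[of "g a" sc W] by simp
qed

lemma zariski_closed_in_Int:
  assumes "zariski_closed_in sc W S" "zariski_closed_in sc W T"
  shows "zariski_closed_in sc W (S \<inter> T)"
proof -
  obtain P Q where "P \<subseteq> polyfun_on sc W" "S = {x \<in> W. \<forall>p\<in>P. p x = 0}"
    and "Q \<subseteq> polyfun_on sc W" "T = {x \<in> W. \<forall>p\<in>Q. p x = 0}"
    using assms unfolding zariski_closed_in_def by blast
  then have "P \<union> Q \<subseteq> polyfun_on sc W \<and> S \<inter> T = {x \<in> W. \<forall>p\<in>P \<union> Q. p x = 0}"
    by blast
  then show ?thesis unfolding zariski_closed_in_def by blast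
qed

locale complex_vector_space = vector_space sc for sc :: "complex \<Rightarrow> 'v::ab_group_add \<Rightarrow> 'v"
begin

lemma subspace_separating_functional:
  assumes "subspace S" "v \<notin> S"
  obtains f where "module_hom sc (*) f" "\<And>s. s \<in> S \<Longrightarrow> f s = 0" "f v \<noteq> 0"
proof -
  obtain B0 where B0: "B0 \<subseteq> S" "independent B0" "S \<subseteq> span B0"
    by (rule basis_exists)
  have "v \<notin> span B0"
    using span_subspace[OF B0(1,3) assms(1)] assms(2) by simp
  then have ind: "independent (insert v B0)"
    using B0(2) by (rule independent_insertI)
  define B where "B = extend_basis (insert v B0)"
  have B: "independent B" "span B = UNIV" "insert v B0 \<subseteq> B"
    using independent_extend_basis[OF ind] span_extend_basis[OF ind] extend_basis_superset[OF ind]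
    unfolding B_def by auto
  show ?thesis
  proof
    show "module_hom sc (*) (\<lambda>y. representation B y v)"
      using linear_representation[OF B(1,2)] by (simp add: module_hom_iff_linear)
    show "representation B s v = 0" if "s \<in> S" for s
    proof -
      have "s \<in> span B0" using that B0(3) by blast
      then have "representation B s = representation B0 s"
        using B(1,3) by (intro representation_extend) auto
      moreover have "v \<notin> B0" using \<open>v \<notin> span B0\<close> span_base by blast
      ultimately show ?thesis using representation_ne_zero[of B0 s v] by auto
    qed
    show "representation B v v \<noteq> 0"
      using representation_basis[OF B(1)] B(3) by simp
  qed
qed

lemma zariski_closed_in_vimage_subspaces:
  assumes "\<And>i. i \<in> I \<Longrightarrow> subspace (S i)"
    and "\<And>i f. i \<in> I \<Longrightarrow> module_hom sc (*) f \<Longrightarrow> (\<lambda>x. f (Q i x)) \<in> polyfun_on sc W"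
  shows "zariski_closed_in sc W {x \<in> W. \<forall>i\<in>I. Q i x \<in> S i}"
proof -
  define P where "P = {(\<lambda>x. f (Q i x)) | i f. i \<in> I \<and> module_hom sc (*) f \<and> (\<forall>s\<in>S i. f s = 0)}"
  have "P \<subseteq> polyfun_on sc W"
    unfolding P_def by (auto intro: assms(2))
  moreover have "(\<forall>p\<in>P. p x = 0) \<longleftrightarrow> (\<forall>i\<in>I. Q i x \<in> S i)" for x
  proof
    assume zero: "\<forall>p\<in>P. p x = 0"
    show "\<forall>i\<in>I. Q i x \<in> S i"
    proof (intro ballI, rule ccontr)
      fix i assume "i \<in> I" "Q i x \<notin> S i"
      obtain f where f: "module_hom sc (*) f" "\<And>s. s \<in> S i \<Longrightarrow> f s = 0" "f (Q i x) \<noteq> 0"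
        using subspace_separating_functional[OF assms(1)[OF \<open>i \<in> I\<close>] \<open>Q i x \<notin> S i\<close>] by blast
      have "(\<lambda>x. f (Q i x)) \<in> P"
        unfolding P_def using \<open>i \<in> I\<close> f(1,2) by (intro CollectI exI[of _ i] exI[of _ f]) simp
      from bspec[OF zero this] f(3) show False by simp
    qed
  next
    assume "\<forall>i\<in>I. Q i x \<in> S i"
    then show "\<forall>p\<in>P. p x = 0"
      unfolding P_def by auto
  qed
  ultimately show ?thesis
    unfolding zariski_closed_in_def by (intro exI[of _ P]) auto
qed

lemma polyfun_on_cong:
  assumes "subspace W" "p \<in> polyfun_on sc W" "\<And>x. x \<in> W \<Longrightarrow> q x = p x"
  shows "q \<in> polyfun_on sc W"
proof -
  have "(\<lambda>x. q x - p x) \<in> polyfun_on sc W"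
    using assms subspace_add subspace_scale by (intro polyfun_on.linear) auto
  then have "(\<lambda>x. p x + (q x - p x)) \<in> polyfun_on sc W"
    by (rule polyfun_on.add[OF assms(2)])
  then show ?thesis by simp
qed

lemma polyfun_on_linear_functional_comp:
  assumes "module_hom sc sc L" "module_hom sc (*) f"
  shows "(\<lambda>x. f (L x)) \<in> polyfun_on sc W"
  by (rule polyfun_on.linear)
    (simp add: module_hom.add[OF assms(1)] module_hom.scale[OF assms(1)]
      module_hom.add[OF assms(2)] module_hom.scale[OF assms(2)])

text \<open>In coordinates c_b with respect to a basis of W, f (\<beta> x x) is the quadratic form
  \<Sum>b b'. c_b x c_b' x f (\<beta> b b').\<close>
lemma polyfun_on_bilinear_diagonal:
  assumes W: "subspace W" "finite B0" "W \<subseteq> span B0"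
    and \<beta>: "\<And>v. module_hom sc sc (\<lambda>u. \<beta> u v)" "\<And>u. module_hom sc sc (\<beta> u)"
    and f: "module_hom sc (*) f"
  shows "(\<lambda>x. f (\<beta> x x)) \<in> polyfun_on sc W"
proof -
  obtain B where B: "B \<subseteq> span B0" "independent B" "span B0 \<subseteq> span B"
    by (rule basis_exists)
  have "finite B" using independent_span_bound[OF W(2) B(2,1)] by blast
  define c where "c b x = representation B x b" for b x
  have c_pf: "c b \<in> polyfun_on sc W" for b
  proof (rule polyfun_on.linear, intro ballI allI)
    fix x y a assume "x \<in> W" "y \<in> W"
    then have "x \<in> span B" "y \<in> span B" using W(3) B(3) by auto
    then show "c b (sc a x + y) = a * c b x + c b y"
      unfolding c_def using B(2) by (simp add: representation_add representation_scale span_scale)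
  qed
  have quadratic: "(\<lambda>x. \<Sum>b'\<in>B. \<Sum>b\<in>B. c b' x * c b x * f (\<beta> b b')) \<in> polyfun_on sc W"
    by (intro polyfun_on_sum \<open>finite B\<close> polyfun_on.mult polyfun_on.const c_pf)
  have expand: "f (\<beta> x x) = (\<Sum>b'\<in>B. \<Sum>b\<in>B. c b' x * c b x * f (\<beta> b b'))" if "x \<in> W" for x
  proof -
    define s where "s = (\<Sum>b\<in>B. sc (c b x) b)"
    have "x = s"
      unfolding s_def c_def using that W(3) B(2,3) \<open>finite B\<close>
      by (intro sum_representation_eq[symmetric]) auto
    have "f (\<beta> s s) = (\<Sum>b'\<in>B. \<Sum>b\<in>B. c b' x * (c b x * f (\<beta> b b')))"
      unfolding s_def
      by (simp add: module_hom.sum[OF \<beta>(1)] module_hom.sum[OF \<beta>(2)] module_hom.scale[OF \<beta>(1)]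
          module_hom.scale[OF \<beta>(2)] module_hom.sum[OF f] module_hom.scale[OF f] sum_distrib_left)
    with \<open>x = s\<close> show ?thesis by (simp add: mult.assoc)
  qed
  from polyfun_on_cong[OF W(1) quadratic expand] show ?thesis .
qed

end

locale vertex_operator_algebra = complex_vector_space sc
  for sc :: "complex \<Rightarrow> 'v::ab_group_add \<Rightarrow> 'v" +
  fixes Y :: "'v \<Rightarrow> int \<Rightarrow> 'v \<Rightarrow> 'v" and vac om :: 'v
  assumes voa: "is_voa sc UNIV Y vac om"
begin

abbreviation V :: "int \<Rightarrow> 'v set" where
  "V n \<equiv> wt_space sc UNIV Y om n"

lemma Y_linear_left: "Y (sc a u + u') n w = sc a (Y u n w) + Y u' n w"
  using voa unfolding is_voa_def by (elim conjE) blast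

lemma Y_linear_right: "Y w n (sc a u + u') = sc a (Y w n u) + Y w n u'"
  using voa unfolding is_voa_def by (elim conjE) blast

lemma Y_truncation: "\<exists>N. \<forall>n\<ge>N. Y u n w = 0"
  using voa unfolding is_voa_def by (elim conjE) blast

lemma Y_vacuum: "Y vac n w = (if n = -1 then w else 0)"
  using voa by (simp add: is_voa_def)

lemma Y_creation: "n \<ge> 0 \<Longrightarrow> Y u n vac = 0" "Y u (-1) vac = u"
  using voa unfolding is_voa_def by (elim conjE; blast)+

lemma Y_borcherds:
  "Sum_any (\<lambda>i::nat. sc ((of_int m :: complex) gchoose i) (Y (Y u (r + int i) v) (m + n - int i) w))
 = Sum_any (\<lambda>i::nat. sc ((-1) ^ i * ((of_int r :: complex) gchoose i))
      (Y u (m + r - int i) (Y v (n + int i) w)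
       - sc ((-1) powi r) (Y v (n + r - int i) (Y u (m + int i) w))))"
  using voa unfolding is_voa_def by (elim conjE) (simp only: ball_UNIV)

lemma Y_L_minus_one: "Y (Y om 0 u) n w = sc (- of_int n) (Y u (n - 1) w)"
  using voa by (simp add: is_voa_def)

lemma finite_spanning_wt_space: "\<exists>B. finite B \<and> B \<subseteq> V n \<and> V n \<subseteq> span B"
  using voa by (simp add: is_voa_def)

lemma wt_space_bounded_below: "\<exists>N. \<forall>n<N. V n = {0}"
  using voa by (simp add: is_voa_def)

lemma Y_zero_left [simp]: "Y 0 n w = 0"
  using Y_linear_left[of 1 0 0 n w] by simp

lemma Y_zero_right [simp]: "Y w n 0 = 0"
  using Y_linear_right[of w n 1 0 0] by simp

lemma module_hom_Y_left: "module_hom sc sc (\<lambda>u. Y u n w)"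
  unfolding module_hom_iff_linear Vector_Spaces.linear_iff
  using vector_space_axioms Y_linear_left[of 1 _ _ n w] Y_linear_left[of _ _ 0 n w] by simp

lemma module_hom_Y_right: "module_hom sc sc (Y w n)"
  unfolding module_hom_iff_linear Vector_Spaces.linear_iff
  using vector_space_axioms Y_linear_right[of w n 1] Y_linear_right[of w n _ _ 0] by simp

lemmas Y_add_left = module_hom.add[OF module_hom_Y_left]
  and Y_scale_left = module_hom.scale[OF module_hom_Y_left]
  and Y_diff_left = module_hom.diff[OF module_hom_Y_left]
  and Y_add_right = module_hom.add[OF module_hom_Y_right]
  and Y_scale_right = module_hom.scale[OF module_hom_Y_right]

lemma Y_commutator:
  "Y u m (Y v n w) - Y v n (Y u m w)
 = Sum_any (\<lambda>i::nat. sc ((of_int m :: complex) gchoose i) (Y (Y u (int i) v) (m + n - int i) w))"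
proof -
  have "Sum_any (\<lambda>i::nat. sc ((of_int m :: complex) gchoose i) (Y (Y u (int i) v) (m + n - int i) w))
      = Sum_any (\<lambda>i::nat. sc ((-1) ^ i * (0 gchoose i))
          (Y u (m - int i) (Y v (n + int i) w) - Y v (n - int i) (Y u (m + int i) w)))"
    using Y_borcherds[of m u 0 v n w] by simp
  also have "\<dots> = (\<Sum>i\<in>{0}. sc ((-1) ^ i * (0 gchoose i))
          (Y u (m - int i) (Y v (n + int i) w) - Y v (n - int i) (Y u (m + int i) w)))"
    by (rule Sum_any.expand_superset) (auto simp: gbinomial_0_left)
  finally show ?thesis by simp
qed

lemma Y_mode_wt_space:
  assumes "u \<in> V a" "w \<in> V b"
  shows "Y u j w \<in> V (a + b - j - 1)"
proof -
  have L0: "Y om 1 u = sc (of_int a) u" "Y om 1 w = sc (of_int b) w"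
    using assms by (simp_all add: wt_space_def)
  have binomial: "1 gchoose i = (0::complex)" if "i \<notin> {0, 1}" for i
    using that by (simp add: binomial_gbinomial[of 1 i, simplified, symmetric])
  have "Y om 1 (Y u j w) - Y u j (Y om 1 w)
      = (\<Sum>i\<in>{0, 1}. sc ((1::complex) gchoose i) (Y (Y om (int i) u) (1 + j - int i) w))"
    unfolding Y_commutator[of om 1] of_int_1 by (rule Sum_any.expand_superset) (use binomial in force)+
  also have "\<dots> = sc (- of_int (1 + j)) (Y u j w) + sc (of_int a) (Y u j w)"
    by (simp add: Y_L_minus_one L0 Y_scale_left)
  finally have "Y om 1 (Y u j w)
      = sc (- of_int (1 + j)) (Y u j w) + sc (of_int a) (Y u j w) + sc (of_int b) (Y u j w)"
    by (simp add: L0 Y_scale_right diff_eq_eq)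
  also have "\<dots> = sc (of_int (a + b - j - 1)) (Y u j w)"
    by (simp add: scale_left_distrib[symmetric])
  finally show ?thesis by (simp add: wt_space_def)
qed

lemma subspace_wt_space: "subspace (V n)"
  unfolding subspace_def wt_space_def
  by (auto simp: Y_add_right Y_scale_right scale_right_distrib mult.commute)

definition agreement :: "'v \<Rightarrow> 'v set" where
  "agreement x = {v. \<forall>k\<ge>0. Y om k v = Y x k v}"

definition graded_agreement :: "'v \<Rightarrow> 'v set" where
  "graded_agreement x = span (\<Union>n. agreement x \<inter> V n)"

lemma subspace_agreement: "subspace (agreement x)"
  unfolding subspace_def agreement_def by (auto simp: Y_add_right Y_scale_right)

lemma graded_agreement_subset: "graded_agreement x \<subseteq> agreement x"
  unfolding graded_agreement_def by (rule span_minimal) (auto intro: subspace_agreement)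

lemma wt_space_subset_graded_agreement: "agreement x \<inter> V n \<subseteq> graded_agreement x"
  unfolding graded_agreement_def by (auto intro: span_base)

text \<open>The commutator formula expresses (\<omega> - x)_k (u_j w) through the modes (\<omega> - x)_i u, i \<ge> 0.\<close>
lemma Y_mode_agreement:
  assumes "u \<in> agreement x" "w \<in> agreement x"
  shows "Y u j w \<in> agreement x"
proof -
  have "Y (om - x) k (Y u j w) = 0" if "k \<ge> 0" for k
  proof -
    have "Y (om - x) (int i) u = 0" for i
      using assms(1) unfolding agreement_def by (simp add: Y_diff_left)
    moreover have "Y (om - x) k w = 0"
      using assms(2) \<open>k \<ge> 0\<close> unfolding agreement_def by (simp add: Y_diff_left)
    ultimately show ?thesis
      using Y_commutator[of "om - x" k u j w] by simp
  qed
  then show ?thesis unfolding agreement_def by (simp add: Y_diff_left)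
qed

lemma Y_mode_graded_agreement:
  assumes "u \<in> graded_agreement x" "w \<in> graded_agreement x"
  shows "Y u j w \<in> graded_agreement x"
proof -
  let ?H = "\<Union>n. agreement x \<inter> V n"
  have homogeneous: "Y u j w \<in> graded_agreement x" if "u \<in> ?H" "w \<in> ?H" for u w
    using that Y_mode_agreement[of u x w j] Y_mode_wt_space[of u _ w _ j]
      wt_space_subset_graded_agreement by blast
  have "subspace {u. \<forall>w\<in>graded_agreement x. Y u j w \<in> graded_agreement x}"
    unfolding subspace_def graded_agreement_def by (auto simp: Y_add_left Y_scale_left span_zero span_add span_scale)
  moreover have "Y u j w \<in> graded_agreement x" if "u \<in> ?H" "w \<in> graded_agreement x" for u w
  proof -
    have "subspace {w. Y u j w \<in> graded_agreement x}"
      unfolding subspace_def graded_agreement_def by (auto simp: Y_add_right Y_scale_right span_zero span_add span_scale)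
    then show ?thesis
      using that homogeneous span_induct[of w ?H] unfolding graded_agreement_def by blast
  qed
  ultimately show ?thesis
    using assms span_induct[of u ?H] unfolding graded_agreement_def by blast
qed

lemma gbinomial_3: "(a::complex) gchoose 3 = a * (a - 1) * (a - 2) / 6"
  by (simp add: gbinomial_prod_rev eval_nat_numeral atLeast0_lessThan_Suc field_simps)

definition semi_conformal_equations :: "'v \<Rightarrow> bool" where
  "semi_conformal_equations x \<longleftrightarrow>
     x \<in> agreement x \<and> Y om 2 x = 0 \<and> Y om 3 x \<in> span {vac} \<and> (\<forall>k\<ge>4. Y om k x = 0)"

text \<open>Since x agrees with \<omega> on x, the modes x_i x are L(i-1) x; the commutator formula then
  has only the terms i \<le> 3, and L(2) x = c \<one> contributes the central charge 2 c.\<close>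
lemma virasoro_relation_if_semi_conformal_equations:
  assumes "x \<in> V 2" "x \<in> agreement x" "Y om 2 x = 0" "Y om 3 x = sc c vac" "\<forall>k\<ge>4. Y om k x = 0"
  shows "Y x (m + 1) (Y x (n + 1) w) - Y x (n + 1) (Y x (m + 1) w)
       = sc (of_int (m - n)) (Y x (m + n + 1) w)
         + sc ((of_int m ^ 3 - of_int m) / 12 * (if m + n = 0 then 2 * c else 0)) w"
proof -
  have xx: "Y x (int i) x = Y om (int i) x" for i
    using assms(2) unfolding agreement_def by simp
  define T where
    "T i = sc ((of_int (m + 1) :: complex) gchoose i) (Y (Y x (int i) x) (m + 1 + (n + 1) - int i) w)"
    for i
  have "Y x (m + 1) (Y x (n + 1) w) - Y x (n + 1) (Y x (m + 1) w) = Sum_any T"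
    unfolding T_def by (rule Y_commutator)
  also have "\<dots> = T 0 + T 1 + T 2 + T 3"
  proof -
    have "T i = 0" if "i \<notin> {0, 1, 2, 3}" for i
      using that assms(5) xx[of i] unfolding T_def by simp
    then have "Sum_any T = sum T {0, 1, 2, 3}"
      by (intro Sum_any.expand_superset) auto
    then show ?thesis by (simp add: add.assoc)
  qed
  also have "T 0 + T 1 = sc (of_int (m - n)) (Y x (m + n + 1) w)"
  proof -
    have "Y om 1 x = sc 2 x" using assms(1) by (simp add: wt_space_def)
    then have "T 0 + T 1 = sc (- of_int (m + n + 2)) (Y x (m + n + 1) w) + sc (of_int (m + 1) * 2) (Y x (m + n + 1) w)"
      unfolding T_def using xx[of 0] xx[of 1] Y_L_minus_one[of x "m + n + 2" w]
      by (simp add: ac_simps Y_scale_left)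
    also have "\<dots> = sc (of_int (m - n)) (Y x (m + n + 1) w)"
      by (simp add: scale_left_distrib[symmetric])
    finally show ?thesis .
  qed
  also have "T 2 = 0"
    unfolding T_def using xx[of 2] assms(3) by simp
  also have "T 3 = sc ((of_int m ^ 3 - of_int m) / 12 * (if m + n = 0 then 2 * c else 0)) w"
  proof -
    have "m + 1 + (n + 1) - int 3 = m + n - 1" by simp
    then have "T 3 = sc ((of_int (m + 1) gchoose 3) * c) (if m + n = 0 then w else 0)"
      unfolding T_def using xx[of 3] assms(4) by (simp add: Y_scale_left Y_vacuum)
    moreover have "(of_int (m + 1) gchoose 3) * c = (of_int m ^ 3 - of_int m) / 12 * (2 * c)"
      unfolding gbinomial_3 by (simp add: field_simps power3_eq_cube)
    ultimately show ?thesis by simp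
  qed
  finally show ?thesis by simp
qed

lemma wt_space_graded_agreement:
  "wt_space sc (graded_agreement x) Y x n = graded_agreement x \<inter> V n"
  using graded_agreement_subset unfolding wt_space_def agreement_def by force

lemma is_voa_graded_agreement:
  assumes "x \<in> V 2" "semi_conformal_equations x"
  shows "is_voa sc (graded_agreement x) Y vac x"
proof -
  let ?U = "graded_agreement x"
  obtain c where c: "Y om 3 x = sc c vac"
    using assms(2) unfolding semi_conformal_equations_def span_singleton by blast
  have x_agree: "x \<in> agreement x"
    using assms(2) unfolding semi_conformal_equations_def by blast
  have vac_U: "vac \<in> ?U"
    using wt_space_subset_graded_agreement[of x 0]
    by (auto simp: agreement_def wt_space_def Y_creation)
  have x_U: "x \<in> ?U"
    using wt_space_subset_graded_agreement[of x 2] assms(1) x_agree by blast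
  have x_wt: "x \<in> wt_space sc ?U Y x 2"
    using x_U x_agree assms(1) unfolding wt_space_graded_agreement by blast
  have virasoro: "\<exists>c. \<forall>m n. \<forall>w\<in>?U. Y x (m + 1) (Y x (n + 1) w) - Y x (n + 1) (Y x (m + 1) w)
      = sc (of_int (m - n)) (Y x (m + n + 1) w)
        + sc ((of_int m ^ 3 - of_int m) / 12 * (if m + n = 0 then c else 0)) w"
    using virasoro_relation_if_semi_conformal_equations[OF assms(1) x_agree _ c] assms(2)
    unfolding semi_conformal_equations_def by blast
  have L_minus_one: "Y (Y x 0 u) n w = sc (- of_int n) (Y u (n - 1) w)" if "u \<in> ?U" for u n w
  proof -
    have "Y x 0 u = Y om 0 u"
      using that graded_agreement_subset[of x] unfolding agreement_def by fastforce
    then show ?thesis by (simp add: Y_L_minus_one)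
  qed
  have graded: "?U \<subseteq> span (\<Union>n. wt_space sc ?U Y x n)"
  proof -
    have "(\<Union>n. agreement x \<inter> V n) \<subseteq> (\<Union>n. wt_space sc ?U Y x n)"
      unfolding wt_space_graded_agreement using wt_space_subset_graded_agreement by blast
    then have "span (\<Union>n. agreement x \<inter> V n) \<subseteq> span (\<Union>n. wt_space sc ?U Y x n)"
      by (rule span_mono)
    then show ?thesis by (subst (1) graded_agreement_def)
  qed
  have finite_wt: "\<exists>B. finite B \<and> B \<subseteq> wt_space sc ?U Y x n \<and> wt_space sc ?U Y x n \<subseteq> span B" for n
  proof -
    obtain B0 where B0: "finite B0" "V n \<subseteq> span B0"
      using finite_spanning_wt_space by blast
    obtain B where B: "B \<subseteq> wt_space sc ?U Y x n" "independent B" "wt_space sc ?U Y x n \<subseteq> span B"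
      by (rule basis_exists)
    have "B \<subseteq> span B0"
      using B(1) B0(2) unfolding wt_space_graded_agreement by blast
    then have "finite B"
      using independent_span_bound[OF B0(1) B(2)] by blast
    with B show ?thesis by blast
  qed
  have bounded_below: "\<exists>N. \<forall>n<N. wt_space sc ?U Y x n = {0}"
  proof -
    obtain N where "\<forall>n<N. V n = {0}"
      using wt_space_bounded_below by blast
    moreover have "0 \<in> ?U"
      unfolding graded_agreement_def by (rule span_zero)
    ultimately show ?thesis
      unfolding wt_space_graded_agreement by auto
  qed
  show ?thesis
    unfolding is_voa_def
    using vac_U x_U x_wt virasoro L_minus_one graded finite_wt bounded_below
      Y_mode_graded_agreement Y_linear_left Y_linear_right Y_truncation Y_vacuum Y_creation
      Y_borcherds
    by (simp add: graded_agreement_def)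
qed

text \<open>Apply the Virasoro relation of the subalgebra with m = k - 1, n = -2 to the vacuum, where
  x_{-1} \<one> = x and x_{k-2} \<one> = x_k \<one> = 0.\<close>
lemma semi_conformal_equations_if_subVOA:
  assumes "semi_conformal_subVOA sc UNIV Y vac om U x"
  shows "semi_conformal_equations x"
proof -
  have agree: "\<forall>k\<ge>0. \<forall>u\<in>U. Y om k u = Y x k u" and U: "is_voa sc U Y vac x"
    using assms unfolding semi_conformal_subVOA_def by blast+
  have x_U: "x \<in> U" and vac_U: "vac \<in> U"
    using U unfolding is_voa_def by blast+
  have creation: "\<forall>u\<in>U. (\<forall>n\<ge>0. Y u n vac = 0) \<and> Y u (-1) vac = u"
    using U unfolding is_voa_def by (elim conjE) assumption
  have "\<exists>c. \<forall>m n. \<forall>w\<in>U.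
        Y x (m + 1) (Y x (n + 1) w) - Y x (n + 1) (Y x (m + 1) w)
      = sc (of_int (m - n)) (Y x (m + n + 1) w)
        + sc ((of_int m ^ 3 - of_int m) / 12 * (if m + n = 0 then c else 0)) w"
    using U unfolding is_voa_def by (elim conjE) assumption
  then obtain c where virasoro: "\<And>m n w. w \<in> U \<Longrightarrow>
        Y x (m + 1) (Y x (n + 1) w) - Y x (n + 1) (Y x (m + 1) w)
      = sc (of_int (m - n)) (Y x (m + n + 1) w)
        + sc ((of_int m ^ 3 - of_int m) / 12 * (if m + n = 0 then c else 0)) w"
    by blast
  have x_mode_x: "Y x k x = sc ((of_int (k - 1) ^ 3 - of_int (k - 1)) / 12 * (if k = 3 then c else 0)) vac"
    if "k \<ge> 2" for k
  proof -
    have "Y x (k - 1 + 1) vac = 0" "Y x (k - 1 - 1) vac = 0" "Y x (-2 + 1) vac = x"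
      using creation x_U that by simp_all
    moreover have "k - 1 + -2 + 1 = k - 1 - 1" "(k - 1 + -2 = 0) = (k = 3)"
      by simp_all
    ultimately show ?thesis
      using virasoro[OF vac_U, of "k - 1" "-2"] by simp
  qed
  have "x \<in> agreement x"
    using agree x_U unfolding agreement_def by blast
  moreover have "Y om 2 x = 0" "Y om 3 x \<in> span {vac}" "\<forall>k\<ge>4. Y om k x = 0"
    using agree x_U x_mode_x[of 2] x_mode_x[of 3] x_mode_x
    by (auto simp: span_singleton)
  ultimately show ?thesis
    unfolding semi_conformal_equations_def by blast
qed

lemma semi_conformal_subVOA_graded_agreement:
  assumes "x \<in> V 2" "semi_conformal_equations x"
  shows "semi_conformal_subVOA sc UNIV Y vac om (graded_agreement x) x"
  using is_voa_graded_agreement[OF assms] graded_agreement_subset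
  unfolding semi_conformal_subVOA_def agreement_def by blast

lemma semi_conformal_vectors_eq:
  "semi_conformal_vectors sc UNIV Y vac om = {x \<in> V 2. semi_conformal_equations x}"
  unfolding semi_conformal_vectors_def
  using semi_conformal_equations_if_subVOA semi_conformal_subVOA_graded_agreement by blast

lemma zariski_closed_semi_conformal_equations:
  "zariski_closed_in sc (V 2) {x \<in> V 2. semi_conformal_equations x}"
proof -
  obtain B where B: "finite B" "V 2 \<subseteq> span B"
    using finite_spanning_wt_space by blast
  have quadratic: "(\<lambda>x. f (Y x k x)) \<in> polyfun_on sc (V 2)" if "module_hom sc (*) f" for f k
    using polyfun_on_bilinear_diagonal[where \<beta> = "\<lambda>u v. Y u k v",
        OF subspace_wt_space B module_hom_Y_left module_hom_Y_right that] .
  have linear: "(\<lambda>x. f (Y om k x)) \<in> polyfun_on sc (V 2)" if "module_hom sc (*) f" for f k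
    using polyfun_on_linear_functional_comp[OF module_hom_Y_right that] .
  have agreement_closed:
    "zariski_closed_in sc (V 2) {x \<in> V 2. \<forall>k\<in>{0..}. Y om k x - Y x k x \<in> {0}}"
  proof (rule zariski_closed_in_vimage_subspaces)
    fix k and f :: "'v \<Rightarrow> complex"
    assume "module_hom sc (*) f"
    then show "(\<lambda>x. f (Y om k x - Y x k x)) \<in> polyfun_on sc (V 2)"
      using polyfun_on_diff[OF linear quadratic] by (simp add: module_hom.diff)
  qed (rule subspace_single_0)
  have virasoro_closed:
    "zariski_closed_in sc (V 2) {x \<in> V 2. \<forall>k\<in>{2..}. Y om k x \<in> (if k = 3 then span {vac} else {0})}"
    by (rule zariski_closed_in_vimage_subspaces) (auto intro: linear subspace_single_0)
  have "{x \<in> V 2. semi_conformal_equations x}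
      = {x \<in> V 2. \<forall>k\<in>{0..}. Y om k x - Y x k x \<in> {0}}
        \<inter> {x \<in> V 2. \<forall>k\<in>{2..}. Y om k x \<in> (if k = 3 then span {vac} else {0})}"
  proof -
    have "k \<ge> 2 \<longleftrightarrow> k = 2 \<or> k = 3 \<or> k \<ge> 4" for k :: int
      by auto
    then show ?thesis
      unfolding semi_conformal_equations_def agreement_def by auto
  qed
  then show ?thesis
    using zariski_closed_in_Int[OF agreement_closed virasoro_closed] by simp
qed

end

theorem theorem1p1:
  fixes sc :: "complex \<Rightarrow> 'v::ab_group_add \<Rightarrow> 'v"
    and Y :: "'v \<Rightarrow> int \<Rightarrow> 'v \<Rightarrow> 'v"
    and vac om :: 'v
  assumes "vector_space sc"
    and "is_voa sc UNIV Y vac om"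
  shows "zariski_closed_in sc (wt_space sc UNIV Y om 2) (semi_conformal_vectors sc UNIV Y vac om)"
proof -
  interpret vertex_operator_algebra sc Y vac om
    by (intro vertex_operator_algebra.intro vertex_operator_algebra_axioms.intro
        complex_vector_space.intro assms)
  show ?thesis
    unfolding semi_conformal_vectors_eq by (rule zariski_closed_semi_conformal_equations)
qed

end
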